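(* Consider the heterogeneous agents $\dot x_i=\sum_{j=1}^N\alpha_{ij}(t)(\mathrm{sat}_j(x_j)-\mathrm{sat}_i(x_i))$, $i\in\{1,\dots,N\}$, with $s_1>s_2>\dots>s_N>0$ and time-varying undirected weights satisfying the standing assumptions. Let $k\in\{1,\dots,N\}$ and $\mathcal V_k=\{1,\dots,k\}$. If $x_i(t^* )\in[-s_k,s_k]$ for all $i\in\mathcal V_k$ at some $t^*\ge t_0$, then $x_i(t)\in[-s_k,s_k]$ for all $i\in\mathcal V_k$ and all $t\ge t^*$.
   Context: $\mathrm{sat}_i(x)=\mathrm{sign}(x)\min\{|x|,s_i\}$. Standing assumptions: $\alpha_{ij}(t)=\alpha_{ji}(t)\ge0$, each $\alpha_{ij}$ continuous on $[0,\infty)$ except on a set of measure zero; Carathéodory solutions. *)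

theory Defs
  imports "HOL-Analysis.Analysis"
begin

definition sat :: "real \<Rightarrow> real \<Rightarrow> real" where
  "sat si v = sgn v * min \<bar>v\<bar> si"

definition rhs :: "nat \<Rightarrow> (nat \<Rightarrow> real) \<Rightarrow> (nat \<Rightarrow> nat \<Rightarrow> real \<Rightarrow> real)
                    \<Rightarrow> (nat \<Rightarrow> real \<Rightarrow> real) \<Rightarrow> nat \<Rightarrow> real \<Rightarrow> real" where
  "rhs N s \<alpha> x i t = (\<Sum>j\<in>{1..N}. \<alpha> i j t * (sat (s j) (x j t) - sat (s i) (x i t)))"

definition weights_ok :: "nat \<Rightarrow> (nat \<Rightarrow> nat \<Rightarrow> real \<Rightarrow> real) \<Rightarrow> bool" where
  "weights_ok N \<alpha> \<longleftrightarrow>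
     (\<forall>i\<in>{1..N}. \<forall>j\<in>{1..N}. \<forall>t\<ge>0. \<alpha> i j t = \<alpha> j i t \<and> \<alpha> i j t \<ge> 0) \<and>
     (\<forall>i\<in>{1..N}. \<forall>j\<in>{1..N}. \<exists>Z. Z \<in> null_sets lborel \<and>
         (\<forall>t\<in>{0..} - Z. continuous (at t within {0..}) (\<alpha> i j)))"

text \<open>Caratheodory solution on [t0, inf): each x_i is absolutely continuous on compact
  intervals, i.e. it is the integral of its (Lebesgue integrable) right-hand side.\<close>
definition carath_solution :: "nat \<Rightarrow> (nat \<Rightarrow> real) \<Rightarrow> (nat \<Rightarrow> nat \<Rightarrow> real \<Rightarrow> real)
                    \<Rightarrow> real \<Rightarrow> (nat \<Rightarrow> real \<Rightarrow> real) \<Rightarrow> bool" where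
  "carath_solution N s \<alpha> t0 x \<longleftrightarrow>
     (\<forall>i\<in>{1..N}. \<forall>t\<ge>t0.
        rhs N s \<alpha> x i absolutely_integrable_on {t0..t} \<and>
        x i t = x i t0 + integral {t0..t} (rhs N s \<alpha> x i))"

end

theory Submission
  imports Defs
begin

(* Let c = s_k. The agents i < k have saturation levels above c. For them the potential
   sum_{i<k} Phi(x_i) (band_potential), where Phi vanishes exactly on [-c, c] and has the
   truncated dead-zone derivative D (band_excess), is nonincreasing: by symmetry of the weights the coupling among these agents
   contributes terms (D x_i - D x_j) (sat_j x_j - sat_i x_i) <= 0, and every agent j >= k has
   |sat_j x_j| <= s_j <= c, so its pull points into the band. Hence the agents i < k stay in
   [-c, c]. Agent k then only sees neighbours with |sat_j x_j| <= c, while its own saturated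
   value is +-c outside the band, so the same potential argument keeps x_k in [-c, c].
   Solutions are only absolutely continuous, so monotonicity of the potential is derived
   directly from the integral equations, using uniform continuity of D along the trajectories
   in place of a chain rule. *)

definition indefinite_integral_on :: "(real \<Rightarrow> real) \<Rightarrow> (real \<Rightarrow> real) \<Rightarrow> real set \<Rightarrow> bool" where
  "indefinite_integral_on f y T \<longleftrightarrow>
     (\<forall>u\<in>T. \<forall>v\<in>T. u \<le> v \<longrightarrow>
        f absolutely_integrable_on {u..v} \<and> y v - y u = integral {u..v} f)"

lemma indefinite_integral_onD:
  assumes "indefinite_integral_on f y {a..b}" "a \<le> u" "u \<le> v" "v \<le> b"
  shows "f integrable_on {u..v}" "(\<lambda>t. \<bar>f t\<bar>) integrable_on {u..v}"
    and "y v - y u = integral {u..v} f"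
  using assms by (auto simp: indefinite_integral_on_def absolutely_integrable_on_def)

lemma indefinite_integral_on_subset:
  "indefinite_integral_on f y T \<Longrightarrow> S \<subseteq> T \<Longrightarrow> indefinite_integral_on f y S"
  unfolding indefinite_integral_on_def by blast

lemma indefinite_integral_on_continuous:
  assumes "indefinite_integral_on f y {a..b}"
  shows "continuous_on {a..b} y"
proof (cases "a \<le> b")
  case True
  have f: "f integrable_on {a..b}"
    using assms True by (auto simp: indefinite_integral_on_def absolutely_integrable_on_def)
  have "continuous_on {a..b} (\<lambda>t. y a + integral {a..t} f)"
    by (intro continuous_intros indefinite_integral_continuous_1 f)
  moreover have "y a + integral {a..t} f = y t" if "t \<in> {a..b}" for t
  proof -
    have "y t - y a = integral {a..t} f"
      using assms that by (simp add: indefinite_integral_on_def)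
    then show ?thesis by simp
  qed
  ultimately show ?thesis
    by (rule continuous_on_eq)
qed simp

lemma uniformly_continuous_on_finite_family:
  fixes g :: "'i \<Rightarrow> 'a::metric_space \<Rightarrow> 'b::metric_space"
  assumes "finite I" "\<And>i. i \<in> I \<Longrightarrow> uniformly_continuous_on S (g i)" "e > 0"
  obtains d where "d > 0"
    "\<And>i u v. i \<in> I \<Longrightarrow> u \<in> S \<Longrightarrow> v \<in> S \<Longrightarrow> dist u v < d \<Longrightarrow> dist (g i u) (g i v) < e"
proof -
  have "\<forall>\<^sub>F d in at_right 0. \<forall>i\<in>I. \<forall>u\<in>S. \<forall>v\<in>S. dist u v < d \<longrightarrow> dist (g i u) (g i v) < e"
  proof (rule eventually_ball_finite[OF \<open>finite I\<close>], rule ballI)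
    fix i assume "i \<in> I"
    then obtain d where "d > 0" "\<forall>u\<in>S. \<forall>v\<in>S. dist v u < d \<longrightarrow> dist (g i v) (g i u) < e"
      using assms(2,3) unfolding uniformly_continuous_on_def by blast
    then show "\<forall>\<^sub>F d' in at_right 0. \<forall>u\<in>S. \<forall>v\<in>S. dist u v < d' \<longrightarrow> dist (g i u) (g i v) < e"
      unfolding eventually_at_right_field by (auto simp: dist_commute)
  qed
  then obtain b where "b > 0" and
    b: "\<forall>d>0. d < b \<longrightarrow> (\<forall>i\<in>I. \<forall>u\<in>S. \<forall>v\<in>S. dist u v < d \<longrightarrow> dist (g i u) (g i v) < e)"
    unfolding eventually_at_right_field by auto
  show ?thesis
    using \<open>b > 0\<close> b[rule_format, of "b/2"] by (intro that[of "b/2"]) auto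
qed

lemma le_by_small_steps:
  fixes W :: "real \<Rightarrow> real"
  assumes "d > 0" "a \<le> b"
    and step: "\<And>u v. a \<le> u \<Longrightarrow> u \<le> v \<Longrightarrow> v \<le> b \<Longrightarrow> v - u < d \<Longrightarrow> W v \<le> W u"
  shows "W b \<le> W a"
proof -
  have "W t \<le> W a" if "a \<le> t" "t \<le> b" "t \<le> a + real n * (d/2)" for n t
    using that
  proof (induction n arbitrary: t)
    case (Suc n)
    let ?u = "a + real n * (d/2)"
    show ?case
    proof (cases "t \<le> ?u")
      case False
      have "real (Suc n) * (d/2) = real n * (d/2) + d/2"
        by (simp add: algebra_simps)
      then have "t - ?u < d"
        using Suc.prems(3) \<open>d > 0\<close> by linarith
      then have "W t \<le> W ?u"
        using Suc.prems False \<open>d > 0\<close> by (intro step) auto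
      also have "W ?u \<le> W a"
        using Suc.prems False \<open>d > 0\<close> by (intro Suc.IH) auto
      finally show ?thesis .
    qed (use Suc in auto)
  qed simp
  moreover obtain n where "(b - a) / (d/2) \<le> real n"
    using real_arch_simple by blast
  ultimately show ?thesis
    using assms by (simp add: field_simps)
qed

lemma potential_increment_le:
  fixes y f :: "'i \<Rightarrow> real \<Rightarrow> real" and \<Phi> \<psi> :: "real \<Rightarrow> real"
  assumes I: "finite I" and "u \<le> v"
    and prim: "\<And>i. i \<in> I \<Longrightarrow> indefinite_integral_on (f i) (y i) {u..v}"
    and subgradient: "\<And>p q. \<Phi> q - \<Phi> p \<le> \<psi> q * (q - p)"
    and dissipative: "\<And>t. t \<in> {u..v} \<Longrightarrow> (\<Sum>i\<in>I. \<psi> (y i t) * f i t) \<le> 0"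
    and oscillation: "\<And>i t. i \<in> I \<Longrightarrow> t \<in> {u..v} \<Longrightarrow> \<bar>\<psi> (y i v) - \<psi> (y i t)\<bar> \<le> e"
  shows "(\<Sum>i\<in>I. \<Phi> (y i v)) - (\<Sum>i\<in>I. \<Phi> (y i u)) \<le> e * (\<Sum>i\<in>I. integral {u..v} (\<lambda>t. \<bar>f i t\<bar>))"
proof -
  note integrable = indefinite_integral_onD[OF prim order_refl \<open>u \<le> v\<close> order_refl]
  have pointwise: "(\<Sum>i\<in>I. \<psi> (y i v) * f i t) \<le> e * (\<Sum>i\<in>I. \<bar>f i t\<bar>)" if t: "t \<in> {u..v}" for t
  proof -
    have "(\<Sum>i\<in>I. \<psi> (y i v) * f i t)
        = (\<Sum>i\<in>I. \<psi> (y i t) * f i t) + (\<Sum>i\<in>I. (\<psi> (y i v) - \<psi> (y i t)) * f i t)"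
      by (simp add: sum.distrib[symmetric] algebra_simps)
    also have "\<dots> \<le> 0 + (\<Sum>i\<in>I. e * \<bar>f i t\<bar>)"
    proof (intro add_mono dissipative[OF t] sum_mono)
      fix i assume "i \<in> I"
      have "(\<psi> (y i v) - \<psi> (y i t)) * f i t \<le> \<bar>\<psi> (y i v) - \<psi> (y i t)\<bar> * \<bar>f i t\<bar>"
        by (metis abs_ge_self abs_mult)
      also have "\<dots> \<le> e * \<bar>f i t\<bar>"
        using oscillation[OF \<open>i \<in> I\<close> t] by (simp add: mult_right_mono)
      finally show "(\<psi> (y i v) - \<psi> (y i t)) * f i t \<le> e * \<bar>f i t\<bar>" .
    qed
    finally show ?thesis
      by (simp add: sum_distrib_left)
  qed
  have "(\<Sum>i\<in>I. \<Phi> (y i v)) - (\<Sum>i\<in>I. \<Phi> (y i u)) \<le> (\<Sum>i\<in>I. \<psi> (y i v) * (y i v - y i u))"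
    unfolding sum_subtractf[symmetric] by (intro sum_mono subgradient)
  also have "\<dots> = integral {u..v} (\<lambda>t. \<Sum>i\<in>I. \<psi> (y i v) * f i t)"
    using integrable by (simp add: integral_sum[OF I] integrable_on_mult_right)
  also have "\<dots> \<le> integral {u..v} (\<lambda>t. e * (\<Sum>i\<in>I. \<bar>f i t\<bar>))"
    using integrable pointwise
    by (intro integral_le) (auto intro!: integrable_sum[OF I] integrable_on_mult_right)
  also have "\<dots> = e * (\<Sum>i\<in>I. integral {u..v} (\<lambda>t. \<bar>f i t\<bar>))"
    using integrable by (simp add: integral_sum[OF I])
  finally show ?thesis .
qed

lemma potential_sum_nonincreasing:
  fixes y f :: "'i \<Rightarrow> real \<Rightarrow> real" and \<Phi> \<psi> :: "real \<Rightarrow> real"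
  assumes I: "finite I" and "a \<le> b"
    and prim: "\<And>i. i \<in> I \<Longrightarrow> indefinite_integral_on (f i) (y i) {a..b}"
    and subgradient: "\<And>p q. \<Phi> q - \<Phi> p \<le> \<psi> q * (q - p)"
    and "continuous_on UNIV \<psi>"
    and dissipative: "\<And>t. t \<in> {a..b} \<Longrightarrow> (\<Sum>i\<in>I. \<psi> (y i t) * f i t) \<le> 0"
  shows "(\<Sum>i\<in>I. \<Phi> (y i b)) \<le> (\<Sum>i\<in>I. \<Phi> (y i a))"
proof -
  define K where "K = (\<Sum>i\<in>I. integral {a..b} (\<lambda>t. \<bar>f i t\<bar>))"
  have "K \<ge> 0"
    unfolding K_def using indefinite_integral_onD(2)[OF prim order_refl \<open>a \<le> b\<close> order_refl]
    by (auto intro!: sum_nonneg integral_nonneg)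
  have slack: "(\<Sum>i\<in>I. \<Phi> (y i b)) \<le> (\<Sum>i\<in>I. \<Phi> (y i a)) + e * K" if "e > 0" for e
  proof -
    have uc: "uniformly_continuous_on {a..b} (\<psi> \<circ> y i)" if "i \<in> I" for i
      using indefinite_integral_on_continuous[OF prim[OF that]] \<open>continuous_on UNIV \<psi>\<close>
      by (intro compact_uniformly_continuous) (auto intro: continuous_on_compose2)
    then obtain d where "d > 0" and d: "\<And>i u v. i \<in> I \<Longrightarrow> u \<in> {a..b} \<Longrightarrow> v \<in> {a..b} \<Longrightarrow>
        dist u v < d \<Longrightarrow> dist ((\<psi> \<circ> y i) u) ((\<psi> \<circ> y i) v) < e"
      using uniformly_continuous_on_finite_family[where g="\<lambda>i. \<psi> \<circ> y i", OF I uc \<open>e > 0\<close>]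
      by blast
    define W where "W t = (\<Sum>i\<in>I. \<Phi> (y i t)) - e * (\<Sum>i\<in>I. integral {a..t} (\<lambda>s. \<bar>f i s\<bar>))" for t
    have "W b \<le> W a"
    proof (rule le_by_small_steps[OF \<open>d > 0\<close> \<open>a \<le> b\<close>])
      fix u v assume uv: "a \<le> u" "u \<le> v" "v \<le> b" "v - u < d"
      have "(\<Sum>i\<in>I. \<Phi> (y i v)) - (\<Sum>i\<in>I. \<Phi> (y i u)) \<le> e * (\<Sum>i\<in>I. integral {u..v} (\<lambda>t. \<bar>f i t\<bar>))"
      proof (rule potential_increment_le[OF I \<open>u \<le> v\<close> _ subgradient dissipative])
        show "indefinite_integral_on (f i) (y i) {u..v}" if "i \<in> I" for i
          using prim[OF that] uv by (auto intro: indefinite_integral_on_subset)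
        show "\<bar>\<psi> (y i v) - \<psi> (y i t)\<bar> \<le> e" if "i \<in> I" "t \<in> {u..v}" for i t
          using d[OF that(1), of v t] that uv by (auto simp: dist_real_def)
      qed (use uv in auto)
      moreover have "integral {u..v} (\<lambda>t. \<bar>f i t\<bar>)
          = integral {a..v} (\<lambda>t. \<bar>f i t\<bar>) - integral {a..u} (\<lambda>t. \<bar>f i t\<bar>)" if "i \<in> I" for i
        using Henstock_Kurzweil_Integration.integral_combine[OF uv(1,2),
            OF indefinite_integral_onD(2)[OF prim[OF that] order_refl _ uv(3)]] uv
        by simp
      ultimately show "W v \<le> W u"
        unfolding W_def by (simp add: sum_subtractf right_diff_distrib)
    qed
    then show ?thesis
      unfolding W_def K_def by simp
  qed
  show ?thesis
  proof (rule field_le_epsilon)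
    fix e :: real assume "e > 0"
    have "e / (K + 1) * K \<le> e"
      using \<open>K \<ge> 0\<close> \<open>e > 0\<close> by (simp add: field_simps)
    then show "(\<Sum>i\<in>I. \<Phi> (y i b)) \<le> (\<Sum>i\<in>I. \<Phi> (y i a)) + e"
      using slack[of "e / (K + 1)"] \<open>K \<ge> 0\<close> \<open>e > 0\<close> by simp
  qed
qed

definition excess :: "real \<Rightarrow> real \<Rightarrow> real \<Rightarrow> real" where
  "excess c m v = min (max (v - c) 0) (m - c)"

definition excess_potential :: "real \<Rightarrow> real \<Rightarrow> real \<Rightarrow> real" where
  "excess_potential c m v = excess c m v * (v - c) - (excess c m v)\<^sup>2 / 2"

lemma excess_potential_subgradient:
  assumes "c < m"
  shows "excess_potential c m q - excess_potential c m p \<le> excess c m q * (q - p)"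
proof -
  let ?d = "excess c m q - excess c m p"
  \<comment> \<open>excess c m p is the projection of p - c onto [0, m - c]\<close>
  have projection: "?d * (p - c - excess c m p) \<le> 0"
    using assms unfolding excess_def
    by (cases "p \<le> c"; cases "p \<le> m")
      (auto simp: min_def max_def intro: mult_nonneg_nonpos mult_nonpos_nonneg)
  have "excess_potential c m q - excess_potential c m p - excess c m q * (q - p)
      = ?d * (p - c - excess c m p) - ?d\<^sup>2 / 2"
    unfolding excess_potential_def power2_eq_square by (simp add: field_simps)
  with projection zero_le_power2[of ?d] show ?thesis
    by linarith
qed

lemma excess_potential_ge: "c < m \<Longrightarrow> (excess c m v)\<^sup>2 / 2 \<le> excess_potential c m v"
  unfolding excess_potential_def excess_def
  by (auto simp: min_def max_def power2_eq_square intro: mult_left_mono)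

lemma excess_potential_eq_0: "c < m \<Longrightarrow> v \<le> c \<Longrightarrow> excess_potential c m v = 0"
  unfolding excess_potential_def excess_def by simp

definition band_excess :: "real \<Rightarrow> real \<Rightarrow> real \<Rightarrow> real" where
  "band_excess c m v = excess c m v - excess c m (- v)"

definition band_potential :: "real \<Rightarrow> real \<Rightarrow> real \<Rightarrow> real" where
  "band_potential c m v = excess_potential c m v + excess_potential c m (- v)"

lemma band_potential_subgradient:
  "c < m \<Longrightarrow> band_potential c m q - band_potential c m p \<le> band_excess c m q * (q - p)"
  using excess_potential_subgradient[of c m q p] excess_potential_subgradient[of c m "- q" "- p"]
  unfolding band_potential_def band_excess_def by (simp add: algebra_simps)

lemma continuous_on_band_excess: "continuous_on UNIV (band_excess c m)"
  unfolding band_excess_def excess_def by (intro continuous_intros)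

lemma band_potential_eq_0: "c < m \<Longrightarrow> \<bar>v\<bar> \<le> c \<Longrightarrow> band_potential c m v = 0"
  unfolding band_potential_def by (simp add: excess_potential_eq_0)

lemma band_potential_nonneg: "c < m \<Longrightarrow> 0 \<le> band_potential c m v"
  unfolding band_potential_def
  by (intro add_nonneg_nonneg order.trans[OF _ excess_potential_ge]) auto

lemma band_potential_pos:
  assumes "c < m" "c < \<bar>v\<bar>"
  shows "0 < band_potential c m v"
proof -
  have "0 < excess c m v \<or> 0 < excess c m (- v)"
    using assms unfolding excess_def by (auto simp: min_def max_def split: abs_split)
  then have "0 < (excess c m v)\<^sup>2 / 2 + (excess c m (- v))\<^sup>2 / 2"
    by (auto intro: add_pos_nonneg add_nonneg_pos)
  also have "\<dots> \<le> band_potential c m v"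
    unfolding band_potential_def using assms(1) by (intro add_mono excess_potential_ge)
  finally show ?thesis .
qed

lemma band_excess_mono: "u \<le> v \<Longrightarrow> band_excess c m u \<le> band_excess c m v"
  unfolding band_excess_def excess_def by (auto simp: min_def max_def)

lemma band_excess_pos_imp: "0 < c \<Longrightarrow> c < m \<Longrightarrow> 0 < band_excess c m v \<Longrightarrow> c < v"
  unfolding band_excess_def excess_def by (auto simp: min_def max_def split: if_splits)

lemma band_excess_neg_imp: "0 < c \<Longrightarrow> c < m \<Longrightarrow> band_excess c m v < 0 \<Longrightarrow> v < - c"
  unfolding band_excess_def excess_def by (auto simp: min_def max_def split: if_splits)

lemma band_excess_saturated_above: "0 < c \<Longrightarrow> c < m \<Longrightarrow> m \<le> v \<Longrightarrow> band_excess c m v = m - c"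
  unfolding band_excess_def excess_def by (auto simp: min_def max_def)

lemma band_excess_saturated_below: "0 < c \<Longrightarrow> c < m \<Longrightarrow> v \<le> - m \<Longrightarrow> band_excess c m v = c - m"
  unfolding band_excess_def excess_def by (auto simp: min_def max_def)

lemma band_invariant:
  fixes y f :: "'i \<Rightarrow> real \<Rightarrow> real"
  assumes I: "finite I" and "a \<le> b" "c < m"
    and prim: "\<And>i. i \<in> I \<Longrightarrow> indefinite_integral_on (f i) (y i) {a..b}"
    and init: "\<And>i. i \<in> I \<Longrightarrow> \<bar>y i a\<bar> \<le> c"
    and dissipative: "\<And>t. t \<in> {a..b} \<Longrightarrow> (\<Sum>i\<in>I. band_excess c m (y i t) * f i t) \<le> 0"
    and "i \<in> I"
  shows "\<bar>y i b\<bar> \<le> c"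
proof (rule ccontr)
  assume "\<not> \<bar>y i b\<bar> \<le> c"
  then have "0 < band_potential c m (y i b)"
    using \<open>c < m\<close> by (intro band_potential_pos) auto
  also have "\<dots> \<le> (\<Sum>i\<in>I. band_potential c m (y i b))"
    using I \<open>i \<in> I\<close> band_potential_nonneg[OF \<open>c < m\<close>] by (intro member_le_sum) auto
  also have "\<dots> \<le> (\<Sum>i\<in>I. band_potential c m (y i a))"
    using band_potential_subgradient[OF \<open>c < m\<close>] continuous_on_band_excess
    by (intro potential_sum_nonincreasing[OF I \<open>a \<le> b\<close> prim _ _ dissipative])
  also have "\<dots> = 0"
    using init \<open>c < m\<close> by (simp add: band_potential_eq_0)
  finally show False by simp
qed

lemma sat_eq_self: "\<bar>v\<bar> \<le> si \<Longrightarrow> sat si v = v"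
  unfolding sat_def by (auto simp: sgn_if)

lemma sat_mono: "0 \<le> si \<Longrightarrow> u \<le> v \<Longrightarrow> sat si u \<le> sat si v"
  unfolding sat_def by (auto simp: sgn_if min_def)

lemma abs_sat_le_level: "0 \<le> si \<Longrightarrow> \<bar>sat si v\<bar> \<le> si"
  unfolding sat_def by (auto simp: sgn_if min_def)

lemma abs_sat_le_abs: "0 \<le> si \<Longrightarrow> \<bar>sat si v\<bar> \<le> \<bar>v\<bar>"
  unfolding sat_def by (auto simp: sgn_if min_def)

(* The truncation at m is what makes this work: band_excess xi and band_excess xj can only
   differ when xj < m and -m < xi, and between -m and m both saturations are the identity. *)
lemma band_excess_sat_pair_nonpos_of_le:
  assumes c: "0 < c" "c < m" and "m < si" "m < sj" and "xj \<le> xi"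
  shows "(band_excess c m xi - band_excess c m xj) * (sat sj xj - sat si xi) \<le> 0"
proof (cases "band_excess c m xi = band_excess c m xj")
  case False
  then have "xj < m" "- m < xi"
    using band_excess_saturated_above[OF c] band_excess_saturated_below[OF c] \<open>xj \<le> xi\<close>
    by (metis order.trans not_le)+
  define z where "z = max xj (- m)"
  have "\<bar>z\<bar> \<le> m" "z \<le> xi"
    using \<open>xj < m\<close> \<open>- m < xi\<close> \<open>xj \<le> xi\<close> c by (auto simp: z_def)
  have "sat sj xj \<le> sat sj z"
    using \<open>m < sj\<close> c by (intro sat_mono) (auto simp: z_def)
  also have "\<dots> = sat si z"
    using \<open>\<bar>z\<bar> \<le> m\<close> \<open>m < si\<close> \<open>m < sj\<close> by (simp add: sat_eq_self)
  also have "\<dots> \<le> sat si xi"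
    using \<open>m < si\<close> c \<open>z \<le> xi\<close> by (intro sat_mono) auto
  finally show ?thesis
    using band_excess_mono[OF \<open>xj \<le> xi\<close>] by (intro mult_nonneg_nonpos) auto
qed simp

lemma band_excess_sat_pair_nonpos:
  assumes "0 < c" "c < m" "m < si" "m < sj"
  shows "(band_excess c m xi - band_excess c m xj) * (sat sj xj - sat si xi) \<le> 0"
  using band_excess_sat_pair_nonpos_of_le[OF assms, of xj xi]
    band_excess_sat_pair_nonpos_of_le[OF assms(1,2,4,3), of xi xj]
  by (cases "xj \<le> xi") (auto simp: algebra_simps)

lemma band_excess_sat_outside_nonpos:
  assumes c: "0 < c" "c < m" and "c \<le> si" "\<bar>w\<bar> \<le> c"
  shows "band_excess c m xi * (w - sat si xi) \<le> 0"
proof -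
  consider "0 < band_excess c m xi" | "band_excess c m xi < 0" | "band_excess c m xi = 0"
    by linarith
  then show ?thesis
  proof cases
    case 1
    then have "c \<le> sat si xi"
      using band_excess_pos_imp[OF c] sat_mono[of si c xi] sat_eq_self[of c si] assms by force
    then show ?thesis
      using 1 \<open>\<bar>w\<bar> \<le> c\<close> by (intro mult_nonneg_nonpos) auto
  next
    case 2
    then have "sat si xi \<le> - c"
      using band_excess_neg_imp[OF c] sat_mono[of si xi "- c"] sat_eq_self[of "- c" si] assms by force
    then show ?thesis
      using 2 \<open>\<bar>w\<bar> \<le> c\<close> by (intro mult_nonpos_nonneg) auto
  qed simp
qed

lemma symmetric_weighted_sum_nonpos:
  fixes A :: "'i \<Rightarrow> 'i \<Rightarrow> real"
  assumes "finite L"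
    and A: "\<And>i j. i \<in> L \<Longrightarrow> j \<in> L \<Longrightarrow> A i j = A j i \<and> 0 \<le> A i j"
    and opposed: "\<And>i j. i \<in> L \<Longrightarrow> j \<in> L \<Longrightarrow> (g i - g j) * (h j - h i) \<le> 0"
  shows "(\<Sum>i\<in>L. g i * (\<Sum>j\<in>L. A i j * (h j - h i))) \<le> 0"
proof -
  let ?S = "\<Sum>i\<in>L. \<Sum>j\<in>L. A i j * g i * (h j - h i)"
  have "?S = (\<Sum>i\<in>L. \<Sum>j\<in>L. A i j * g j * (h i - h j))"
    using A by (subst sum.swap) (auto intro!: sum.cong)
  then have "2 * ?S = (\<Sum>i\<in>L. \<Sum>j\<in>L. A i j * g i * (h j - h i) + A i j * g j * (h i - h j))"
    by (simp add: sum.distrib)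
  also have "\<dots> = (\<Sum>i\<in>L. \<Sum>j\<in>L. A i j * ((g i - g j) * (h j - h i)))"
    by (intro sum.cong refl) (simp add: algebra_simps)
  also have "\<dots> \<le> 0"
    using A opposed by (intro sum_nonpos mult_nonneg_nonpos[OF _ opposed]) auto
  finally have "?S \<le> 0" by simp
  moreover have "(\<Sum>i\<in>L. g i * (\<Sum>j\<in>L. A i j * (h j - h i))) = ?S"
    by (simp add: sum_distrib_left mult.assoc mult.left_commute)
  ultimately show ?thesis by simp
qed

lemma band_dissipation_of_fast_agents:
  fixes X s :: "nat \<Rightarrow> real" and A :: "nat \<Rightarrow> nat \<Rightarrow> real"
  assumes "finite L" "finite E" "L \<inter> E = {}" and c: "0 < c" "c < m"
    and fast: "\<And>i. i \<in> L \<Longrightarrow> m < s i"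
    and slow: "\<And>j. j \<in> E \<Longrightarrow> \<bar>sat (s j) (X j)\<bar> \<le> c"
    and A: "\<And>i j. i \<in> L \<union> E \<Longrightarrow> j \<in> L \<union> E \<Longrightarrow> A i j = A j i \<and> 0 \<le> A i j"
  shows "(\<Sum>i\<in>L. band_excess c m (X i) *
            (\<Sum>j\<in>L \<union> E. A i j * (sat (s j) (X j) - sat (s i) (X i)))) \<le> 0"
proof -
  let ?D = "\<lambda>i. band_excess c m (X i)" and ?S = "\<lambda>i. sat (s i) (X i)"
  have "(\<Sum>i\<in>L. ?D i * (\<Sum>j\<in>L \<union> E. A i j * (?S j - ?S i)))
      = (\<Sum>i\<in>L. ?D i * (\<Sum>j\<in>L. A i j * (?S j - ?S i)))
        + (\<Sum>i\<in>L. \<Sum>j\<in>E. A i j * (?D i * (?S j - ?S i)))"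
    using assms(1-3)
    by (simp add: sum.union_disjoint sum.distrib[symmetric] sum_distrib_left algebra_simps)
  also have "\<dots> \<le> 0 + 0"
  proof (intro add_mono)
    show "(\<Sum>i\<in>L. ?D i * (\<Sum>j\<in>L. A i j * (?S j - ?S i))) \<le> 0"
      using A fast c by (intro symmetric_weighted_sum_nonpos \<open>finite L\<close> band_excess_sat_pair_nonpos) auto
    show "(\<Sum>i\<in>L. \<Sum>j\<in>E. A i j * (?D i * (?S j - ?S i))) \<le> 0"
    proof (intro sum_nonpos)
      fix i j assume "i \<in> L" "j \<in> E"
      then show "A i j * (?D i * (?S j - ?S i)) \<le> 0"
        using A fast[of i] slow[of j] c
        by (intro mult_nonneg_nonpos[OF _ band_excess_sat_outside_nonpos]) auto
    qed
  qed
  finally show ?thesis by simp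
qed

lemma exists_between_finite:
  fixes s :: "'i \<Rightarrow> real"
  assumes "finite L" "\<And>i. i \<in> L \<Longrightarrow> c < s i"
  obtains m where "c < m" "\<And>i. i \<in> L \<Longrightarrow> m < s i"
proof -
  define \<mu> where "\<mu> = Min (insert (c + 1) (s ` L))"
  have "c < \<mu>" "\<And>i. i \<in> L \<Longrightarrow> \<mu> \<le> s i"
    using assms by (auto simp: \<mu>_def)
  then show ?thesis
    using that[of "(c + \<mu>) / 2"] by fastforce
qed

lemma carath_solution_indefinite_integral:
  assumes "carath_solution N s \<alpha> t0 x" "i \<in> {1..N}"
  shows "indefinite_integral_on (rhs N s \<alpha> x i) (x i) {t0..}"
  unfolding indefinite_integral_on_def
proof (intro ballI impI conjI)
  fix u v assume "u \<in> {t0..}" "v \<in> {t0..}" "u \<le> v"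
  have sol: "rhs N s \<alpha> x i absolutely_integrable_on {t0..t}"
    "x i t = x i t0 + integral {t0..t} (rhs N s \<alpha> x i)" if "t0 \<le> t" for t
    using assms that unfolding carath_solution_def by blast+
  show "rhs N s \<alpha> x i absolutely_integrable_on {u..v}"
    using \<open>u \<in> {t0..}\<close> \<open>v \<in> {t0..}\<close>
    by (intro absolutely_integrable_on_subinterval[OF sol(1)[of v]]) auto
  have "integral {t0..u} (rhs N s \<alpha> x i) + integral {u..v} (rhs N s \<alpha> x i)
      = integral {t0..v} (rhs N s \<alpha> x i)"
    using \<open>u \<in> {t0..}\<close> \<open>u \<le> v\<close> sol(1)[of v]
    by (intro Henstock_Kurzweil_Integration.integral_combine) (auto simp: absolutely_integrable_on_def)
  then show "x i v - x i u = integral {u..v} (rhs N s \<alpha> x i)"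
    using sol(2)[of u] sol(2)[of v] \<open>u \<in> {t0..}\<close> \<open>u \<le> v\<close> by simp
qed

locale saturated_network =
  fixes N :: nat and s :: "nat \<Rightarrow> real" and \<alpha> :: "nat \<Rightarrow> nat \<Rightarrow> real \<Rightarrow> real"
    and x :: "nat \<Rightarrow> real \<Rightarrow> real" and a :: real
  assumes levels_decreasing: "\<And>i j. i \<in> {1..N} \<Longrightarrow> j \<in> {1..N} \<Longrightarrow> i < j \<Longrightarrow> s j < s i"
    and last_level_pos: "0 < s N"
    and weights: "\<And>i j t. i \<in> {1..N} \<Longrightarrow> j \<in> {1..N} \<Longrightarrow> a \<le> t \<Longrightarrow> \<alpha> i j t = \<alpha> j i t \<and> 0 \<le> \<alpha> i j t"
    and solution: "\<And>i. i \<in> {1..N} \<Longrightarrow> indefinite_integral_on (rhs N s \<alpha> x i) (x i) {a..}"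
begin

lemma level_antimono: "i \<in> {1..N} \<Longrightarrow> j \<in> {1..N} \<Longrightarrow> i \<le> j \<Longrightarrow> s j \<le> s i"
  using levels_decreasing[of i j] by (cases "i = j") auto

lemma level_pos: "j \<in> {1..N} \<Longrightarrow> 0 < s j"
  using level_antimono[of j N] last_level_pos by auto

lemma solution_on_interval: "i \<in> {1..N} \<Longrightarrow> indefinite_integral_on (rhs N s \<alpha> x i) (x i) {a..t}"
  using solution by (rule indefinite_integral_on_subset) auto

lemma abs_sat_le_level_of_ge:
  "k \<in> {1..N} \<Longrightarrow> j \<in> {k..N} \<Longrightarrow> \<bar>sat (s j) v\<bar> \<le> s k"
  using abs_sat_le_level[of "s j" v] level_pos[of j] level_antimono[of k j] by auto

lemma faster_agents_stay_in_band:
  assumes k: "k \<in> {1..N}" and init: "\<And>i. i \<in> {1..k} \<Longrightarrow> \<bar>x i a\<bar> \<le> s k"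
    and "i \<in> {1..<k}" "a \<le> t"
  shows "\<bar>x i t\<bar> \<le> s k"
proof -
  obtain m where "s k < m" and m: "\<And>i. i \<in> {1..<k} \<Longrightarrow> m < s i"
    using levels_decreasing k by (auto intro: exists_between_finite[of "{1..<k}" "s k" s])
  have split: "{1..<k} \<union> {k..N} = {1..N}"
    using k by auto
  show ?thesis
  proof (rule band_invariant[OF _ \<open>a \<le> t\<close> \<open>s k < m\<close> solution_on_interval init _ \<open>i \<in> {1..<k}\<close>])
    fix \<tau> assume "\<tau> \<in> {a..t}"
    have "(\<Sum>i\<in>{1..<k}. band_excess (s k) m (x i \<tau>) *
        (\<Sum>j\<in>{1..<k} \<union> {k..N}. \<alpha> i j \<tau> * (sat (s j) (x j \<tau>) - sat (s i) (x i \<tau>)))) \<le> 0"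
      using \<open>\<tau> \<in> {a..t}\<close> split
      by (intro band_dissipation_of_fast_agents level_pos[OF k] \<open>s k < m\<close> m abs_sat_le_level_of_ge[OF k]
          weights) auto
    then show "(\<Sum>i\<in>{1..<k}. band_excess (s k) m (x i \<tau>) * rhs N s \<alpha> x i \<tau>) \<le> 0"
      unfolding rhs_def split .
  qed (use k in auto)
qed

lemma agent_k_stays_in_band:
  assumes k: "k \<in> {1..N}" and init: "\<bar>x k a\<bar> \<le> s k"
    and faster: "\<And>i t. i \<in> {1..<k} \<Longrightarrow> a \<le> t \<Longrightarrow> \<bar>x i t\<bar> \<le> s k"
    and "a \<le> t"
  shows "\<bar>x k t\<bar> \<le> s k"
proof (rule band_invariant[where I="{k}" and m="s k + 1", OF _ \<open>a \<le> t\<close> _ solution_on_interval])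
  fix \<tau> assume "\<tau> \<in> {a..t}"
  have "\<bar>sat (s j) (x j \<tau>)\<bar> \<le> s k" if "j \<in> {1..N}" for j
  proof (cases "j < k")
    case True
    then show ?thesis
      using abs_sat_le_abs[of "s j" "x j \<tau>"] level_pos[OF that] faster[of j \<tau>] that \<open>\<tau> \<in> {a..t}\<close>
      by auto
  qed (use that abs_sat_le_level_of_ge[OF k] in auto)
  moreover have "0 \<le> \<alpha> k j \<tau>" if "j \<in> {1..N}" for j
    using weights[OF k that, of \<tau>] \<open>\<tau> \<in> {a..t}\<close> by simp
  ultimately show "(\<Sum>i\<in>{k}. band_excess (s k) (s k + 1) (x i \<tau>) * rhs N s \<alpha> x i \<tau>) \<le> 0"
    using level_pos[OF k] unfolding rhs_def sum_distrib_left
    by (intro sum_nonpos) (simp add: mult.left_commute mult_nonneg_nonpos band_excess_sat_outside_nonpos)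
qed (use k init in auto)

end

theorem lemma11:
  fixes N k :: nat and s :: "nat \<Rightarrow> real" and \<alpha> :: "nat \<Rightarrow> nat \<Rightarrow> real \<Rightarrow> real"
    and x :: "nat \<Rightarrow> real \<Rightarrow> real" and t0 tstar :: real
  assumes s_dec: "\<And>i j. i \<in> {1..N} \<Longrightarrow> j \<in> {1..N} \<Longrightarrow> i < j \<Longrightarrow> s j < s i"
    and s_pos: "s N > 0"
    and weights: "weights_ok N \<alpha>"
    and t0: "t0 \<ge> 0"
    and sol: "carath_solution N s \<alpha> t0 x"
    and k: "k \<in> {1..N}"
    and tstar: "tstar \<ge> t0"
    and init: "\<And>i. i \<in> {1..k} \<Longrightarrow> x i tstar \<in> {- s k .. s k}"
  shows "\<forall>i\<in>{1..k}. \<forall>t\<ge>tstar. x i t \<in> {- s k .. s k}"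
proof -
  interpret saturated_network N s \<alpha> x tstar
  proof
    show "\<alpha> i j t = \<alpha> j i t \<and> 0 \<le> \<alpha> i j t" if "i \<in> {1..N}" "j \<in> {1..N}" "tstar \<le> t" for i j t
      using weights that t0 tstar unfolding weights_ok_def by auto
    show "indefinite_integral_on (rhs N s \<alpha> x i) (x i) {tstar..}" if "i \<in> {1..N}" for i
      by (rule indefinite_integral_on_subset[OF carath_solution_indefinite_integral[OF sol that]])
        (use tstar in auto)
  qed (fact s_dec, fact s_pos)
  have init': "\<bar>x i tstar\<bar> \<le> s k" if "i \<in> {1..k}" for i
    using init[OF that] by (simp add: abs_le_iff)
  have faster: "\<bar>x i t\<bar> \<le> s k" if "i \<in> {1..<k}" "tstar \<le> t" for i t
    using faster_agents_stay_in_band[OF k init' that] .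
  have bound: "\<bar>x i t\<bar> \<le> s k" if "i \<in> {1..k}" "tstar \<le> t" for i t
  proof (cases "i = k")
    case True
    then show ?thesis
      using agent_k_stays_in_band[OF k init' faster \<open>tstar \<le> t\<close>] k by simp
  next
    case False
    with that have "i \<in> {1..<k}" by auto
    then show ?thesis
      using faster \<open>tstar \<le> t\<close> by blast
  qed
  show ?thesis
  proof (intro ballI allI impI)
    fix i t assume "i \<in> {1..k}" "tstar \<le> t"
    then show "x i t \<in> {- s k .. s k}"
      using bound[of i t] by (simp add: abs_le_iff)
  qed
qed

end
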